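(* Let $\alpha$ be a graph function on a strongly connected digraph $G$ and let $v$ be a vertex with $\alpha_v^{\text{in}}\neq\alpha_v^{\text{out}}$. If $\bar\alpha$ is the graph function obtained from $\alpha$ by the balancing operation at $v$, then $\bar\alpha<\alpha$ in the order defined below.
   Context: $G$ is a strongly connected directed graph (self-loops allowed); a graph function assigns a real weight $\alpha_{uv}$ to each edge. $\alpha_v^{\text{in}}=\max_{u:(u,v)\in G}\alpha_{uv}$, $\alpha_v^{\text{out}}=\max_{w:(v,w)\in G}\alpha_{vw}$. The balancing operation at $v$ adds $(\alpha_v^{\text{out}}-\alpha_v^{\text{in}})/2$ to each $\alpha_{uv}$ with $u\ne v$, subtracts it from each $\alpha_{vw}$ with $w\ne v$, and leaves a self-loop unchanged. For real $w$, $G_\alpha^w$ is the subgraph of edges $(u,v)$ with $\alpha_{uv}\ge w$, isolated vertices removed (a vertex with a self-loop is not isolated). For two graph functions $\alpha,\gamma$ on $G$, $\alpha<\gamma$ means: for the largest $w$ with $G_\alpha^w\ne G_\gamma^w$, one has $G_\alpha^w\subset G_\gamma^w$. *)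

theory Defs
  imports Complex_Main
begin

text \<open>A graph function is a real weight on edges, represented as
  a function on pairs (only its values on E matter).\<close>

definition digraph :: "'a set \<Rightarrow> ('a \<times> 'a) set \<Rightarrow> bool" where
  "digraph V E \<longleftrightarrow> finite V \<and> E \<subseteq> V \<times> V"

definition strongly_connected :: "'a set \<Rightarrow> ('a \<times> 'a) set \<Rightarrow> bool" where
  "strongly_connected V E \<longleftrightarrow> V \<noteq> {} \<and> (\<forall>u\<in>V. \<forall>v\<in>V. (u, v) \<in> E\<^sup>*)"

definition alpha_in :: "('a \<times> 'a) set \<Rightarrow> ('a \<times> 'a \<Rightarrow> real) \<Rightarrow> 'a \<Rightarrow> real" where
  "alpha_in E \<alpha> v = Max {\<alpha> (u, v) | u. (u, v) \<in> E}"

definition alpha_out :: "('a \<times> 'a) set \<Rightarrow> ('a \<times> 'a \<Rightarrow> real) \<Rightarrow> 'a \<Rightarrow> real" where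
  "alpha_out E \<alpha> v = Max {\<alpha> (v, w) | w. (v, w) \<in> E}"

definition balance :: "('a \<times> 'a) set \<Rightarrow> ('a \<times> 'a \<Rightarrow> real) \<Rightarrow> 'a \<Rightarrow> ('a \<times> 'a \<Rightarrow> real)" where
  "balance E \<alpha> v = (\<lambda>(x, y).
     (let d = (alpha_out E \<alpha> v - alpha_in E \<alpha> v) / 2 in
      if x = y then \<alpha> (x, y)
      else if y = v then \<alpha> (x, y) + d
      else if x = v then \<alpha> (x, y) - d
      else \<alpha> (x, y)))"

text \<open>The subgraph G_\<alpha>^w: edges with weight \<ge> w, vertices = their endpoints
  (isolated vertices removed; a vertex with a self-loop is kept).  Represented as
  a pair (vertex set, edge set).\<close>
definition level_graph :: "('a \<times> 'a) set \<Rightarrow> ('a \<times> 'a \<Rightarrow> real) \<Rightarrow> real \<Rightarrow> 'a set \<times> ('a \<times> 'a) set" where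
  "level_graph E \<alpha> w =
     (let E' = {e \<in> E. \<alpha> e \<ge> w} in (fst ` E' \<union> snd ` E', E'))"

definition subgraph :: "'a set \<times> ('a \<times> 'a) set \<Rightarrow> 'a set \<times> ('a \<times> 'a) set \<Rightarrow> bool" where
  "subgraph H K \<longleftrightarrow> fst H \<subseteq> fst K \<and> snd H \<subseteq> snd K"

definition proper_subgraph :: "'a set \<times> ('a \<times> 'a) set \<Rightarrow> 'a set \<times> ('a \<times> 'a) set \<Rightarrow> bool" where
  "proper_subgraph H K \<longleftrightarrow> subgraph H K \<and> H \<noteq> K"

definition gf_less :: "('a \<times> 'a) set \<Rightarrow> ('a \<times> 'a \<Rightarrow> real) \<Rightarrow> ('a \<times> 'a \<Rightarrow> real) \<Rightarrow> bool" where
  "gf_less E \<alpha> \<gamma> \<longleftrightarrow>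
     (\<exists>w. level_graph E \<alpha> w \<noteq> level_graph E \<gamma> w
        \<and> (\<forall>w'. w' > w \<longrightarrow> level_graph E \<alpha> w' = level_graph E \<gamma> w')
        \<and> proper_subgraph (level_graph E \<alpha> w) (level_graph E \<gamma> w))"

end

theory Submission
  imports Defs
begin

text \<open>Let \<open>M\<close> be the larger of \<open>alpha_in\<close> and \<open>alpha_out\<close> at \<open>v\<close>. Balancing at \<open>v\<close> leaves
  the edges away from \<open>v\<close> unchanged and pushes every edge at \<open>v\<close> strictly below \<open>M\<close>: a
  non-loop edge ends at weight at most the average of \<open>alpha_in\<close> and \<open>alpha_out\<close>, and a loop
  stays at most their minimum. Since all edges at \<open>v\<close> weighed at most \<open>M\<close> before, the level
  graphs above \<open>M\<close> coincide, while at level \<open>M\<close> the balanced level graph loses the edge at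
  \<open>v\<close> realising \<open>M\<close>. That edge exists because, by strong connectivity, \<open>v\<close> has both an
  incoming and an outgoing edge.\<close>

definition level_edges :: "('a \<times> 'a) set \<Rightarrow> ('a \<times> 'a \<Rightarrow> real) \<Rightarrow> real \<Rightarrow> ('a \<times> 'a) set" where
  "level_edges E \<alpha> w = {e \<in> E. w \<le> \<alpha> e}"

lemma level_graph_level_edges:
  "level_graph E \<alpha> w = (fst ` level_edges E \<alpha> w \<union> snd ` level_edges E \<alpha> w, level_edges E \<alpha> w)"
  by (simp add: level_graph_def level_edges_def Let_def)

lemma gf_lessI_level_edges:
  assumes "\<And>w. M < w \<Longrightarrow> level_edges E \<beta> w = level_edges E \<alpha> w"
    and "level_edges E \<beta> M \<subset> level_edges E \<alpha> M"
  shows "gf_less E \<beta> \<alpha>"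
  unfolding gf_less_def
proof (intro exI[of _ M] conjI allI impI)
  show "level_graph E \<beta> M \<noteq> level_graph E \<alpha> M"
    using assms(2) by (auto simp: level_graph_level_edges)
  show "level_graph E \<beta> w = level_graph E \<alpha> w" if "M < w" for w
    using assms(1)[OF that] by (simp add: level_graph_level_edges)
  show "proper_subgraph (level_graph E \<beta> M) (level_graph E \<alpha> M)"
    using assms(2) by (auto simp: proper_subgraph_def subgraph_def level_graph_level_edges)
qed

lemma strongly_connected_in_edge_imp_out_edge:
  assumes "strongly_connected V E" "E \<subseteq> V \<times> V" "(u, v) \<in> E"
  obtains w where "(v, w) \<in> E"
proof (cases "u = v")
  case True
  then show ?thesis using assms(3) that by blast
next
  case False
  have "(v, u) \<in> E\<^sup>*"
    using assms unfolding strongly_connected_def by blast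
  then show ?thesis
    using False that by (auto elim: converse_rtranclE)
qed

lemma strongly_connected_out_edge_imp_in_edge:
  assumes "strongly_connected V E" "E \<subseteq> V \<times> V" "(v, w) \<in> E"
  obtains u where "(u, v) \<in> E"
proof (cases "w = v")
  case True
  then show ?thesis using assms(3) that by blast
next
  case False
  have "(w, v) \<in> E\<^sup>*"
    using assms unfolding strongly_connected_def by blast
  then show ?thesis
    using False that by (auto elim: rtranclE)
qed

lemma finite_in_weights: "finite E \<Longrightarrow> finite {\<alpha> (u, v) | u. (u, v) \<in> E}"
proof -
  have "{\<alpha> (u, v) | u. (u, v) \<in> E} = \<alpha> ` {e \<in> E. snd e = v}" by force
  then show "finite E \<Longrightarrow> ?thesis" by simp
qed

lemma finite_out_weights: "finite E \<Longrightarrow> finite {\<alpha> (v, w) | w. (v, w) \<in> E}"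
proof -
  have "{\<alpha> (v, w) | w. (v, w) \<in> E} = \<alpha> ` {e \<in> E. fst e = v}" by force
  then show "finite E \<Longrightarrow> ?thesis" by simp
qed

lemma alpha_in_ge: "finite E \<Longrightarrow> (u, v) \<in> E \<Longrightarrow> \<alpha> (u, v) \<le> alpha_in E \<alpha> v"
  unfolding alpha_in_def by (rule Max_ge) (auto simp: finite_in_weights)

lemma alpha_out_ge: "finite E \<Longrightarrow> (v, w) \<in> E \<Longrightarrow> \<alpha> (v, w) \<le> alpha_out E \<alpha> v"
  unfolding alpha_out_def by (rule Max_ge) (auto simp: finite_out_weights)

lemma alpha_in_attained:
  assumes "finite E" "(u, v) \<in> E"
  obtains u' where "(u', v) \<in> E" "\<alpha> (u', v) = alpha_in E \<alpha> v"
proof -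
  have "alpha_in E \<alpha> v \<in> {\<alpha> (u, v) | u. (u, v) \<in> E}"
    unfolding alpha_in_def using assms by (intro Max_in) (auto simp: finite_in_weights)
  then show ?thesis using that by auto
qed

lemma alpha_out_attained:
  assumes "finite E" "(v, w) \<in> E"
  obtains w' where "(v, w') \<in> E" "\<alpha> (v, w') = alpha_out E \<alpha> v"
proof -
  have "alpha_out E \<alpha> v \<in> {\<alpha> (v, w) | w. (v, w) \<in> E}"
    unfolding alpha_out_def using assms by (intro Max_in) (auto simp: finite_out_weights)
  then show ?thesis using that by auto
qed

lemma balance_apart: "x \<noteq> v \<Longrightarrow> y \<noteq> v \<Longrightarrow> balance E \<alpha> v (x, y) = \<alpha> (x, y)"
  by (simp add: balance_def Let_def)

lemma incident_le_max_in_out: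
  assumes "finite E" "(x, y) \<in> E" "x = v \<or> y = v"
  shows "\<alpha> (x, y) \<le> max (alpha_in E \<alpha> v) (alpha_out E \<alpha> v)"
  using assms alpha_in_ge[of E _ v \<alpha>] alpha_out_ge[of E v _ \<alpha>] by (auto simp: le_max_iff_disj)

lemma balance_incident_less_max_in_out:
  assumes "finite E" "(x, y) \<in> E" "x = v \<or> y = v" "alpha_in E \<alpha> v \<noteq> alpha_out E \<alpha> v"
  shows "balance E \<alpha> v (x, y) < max (alpha_in E \<alpha> v) (alpha_out E \<alpha> v)"
proof -
  define a b where "a = alpha_in E \<alpha> v" and "b = alpha_out E \<alpha> v"
  have ab: "a \<noteq> b" using assms(4) by (simp add: a_def b_def)
  have bal: "balance E \<alpha> v (x, y) = (if x = y then \<alpha> (x, y) else if y = v then \<alpha> (x, y) + (b - a) / 2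
      else \<alpha> (x, y) - (b - a) / 2)"
    using assms(3) by (auto simp: balance_def a_def b_def Let_def)
  consider "x = v" "y = v" | "y = v" "x \<noteq> v" | "x = v" "y \<noteq> v" using assms(3) by blast
  then show ?thesis
  proof cases
    case 1
    then have "\<alpha> (x, y) \<le> a" "\<alpha> (x, y) \<le> b"
      using alpha_in_ge alpha_out_ge assms(1,2) by (auto simp: a_def b_def)
    then show ?thesis using 1 bal ab by (auto simp: a_def[symmetric] b_def[symmetric])
  next
    case 2
    then have "\<alpha> (x, y) \<le> a" using alpha_in_ge assms(1,2) by (auto simp: a_def)
    then show ?thesis using 2 bal ab by (auto simp: a_def[symmetric] b_def[symmetric] max_def field_simps)
  next
    case 3
    then have "\<alpha> (x, y) \<le> b" using alpha_out_ge assms(1,2) by (auto simp: b_def)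
    then show ?thesis using 3 bal ab by (auto simp: a_def[symmetric] b_def[symmetric] max_def field_simps)
  qed
qed

lemma max_in_out_attained:
  assumes "finite E" "(u, v) \<in> E" "(v, w) \<in> E"
  obtains x y where "(x, y) \<in> E" "x = v \<or> y = v"
    "\<alpha> (x, y) = max (alpha_in E \<alpha> v) (alpha_out E \<alpha> v)"
proof (cases "alpha_in E \<alpha> v \<le> alpha_out E \<alpha> v")
  case True
  then show ?thesis
    using alpha_out_attained[OF assms(1,3)] that by (metis max.absorb2)
next
  case False
  then show ?thesis
    using alpha_in_attained[OF assms(1,2)] that by (metis max.absorb1 nle_le)
qed

lemma incident_edge_if_alpha_in_neq_alpha_out:
  assumes "alpha_in E \<alpha> v \<noteq> alpha_out E \<alpha> v"
  shows "(\<exists>u. (u, v) \<in> E) \<or> (\<exists>w. (v, w) \<in> E)"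
proof (rule ccontr)
  assume "\<not> ?thesis"
  then have "{\<alpha> (u, v) | u. (u, v) \<in> E} = {}" "{\<alpha> (v, w) | w. (v, w) \<in> E} = {}" by auto
  then show False using assms by (simp add: alpha_in_def alpha_out_def)
qed

theorem lemma8:
  fixes V :: "'a set" and E :: "('a \<times> 'a) set" and \<alpha> :: "'a \<times> 'a \<Rightarrow> real" and v :: 'a
  assumes "digraph V E"
    and "strongly_connected V E"
    and "v \<in> V"
    and "alpha_in E \<alpha> v \<noteq> alpha_out E \<alpha> v"
  shows "gf_less E (balance E \<alpha> v) \<alpha>"
proof -
  have E: "finite E" "E \<subseteq> V \<times> V"
    using assms(1) unfolding digraph_def by (auto intro: finite_subset)
  obtain u w where "(u, v) \<in> E" "(v, w) \<in> E"
    using incident_edge_if_alpha_in_neq_alpha_out[OF assms(4)]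
      strongly_connected_in_edge_imp_out_edge[OF assms(2) E(2)]
      strongly_connected_out_edge_imp_in_edge[OF assms(2) E(2)] by metis
  then obtain x y where top: "(x, y) \<in> E" "x = v \<or> y = v"
    "\<alpha> (x, y) = max (alpha_in E \<alpha> v) (alpha_out E \<alpha> v)"
    using max_in_out_attained[OF E(1)] by metis
  define M where "M = max (alpha_in E \<alpha> v) (alpha_out E \<alpha> v)"
  have apart: "balance E \<alpha> v e = \<alpha> e" if "fst e \<noteq> v" "snd e \<noteq> v" for e
    using that balance_apart[of "fst e" v "snd e"] by simp
  have incident: "\<alpha> e \<le> M" "balance E \<alpha> v e < M" if "e \<in> E" "fst e = v \<or> snd e = v" for e
    using that incident_le_max_in_out[OF E(1), of "fst e" "snd e"]
      balance_incident_less_max_in_out[OF E(1), of "fst e" "snd e" v \<alpha>] assms(4)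
    by (auto simp: M_def)
  show ?thesis
  proof (rule gf_lessI_level_edges[of M])
    show "level_edges E (balance E \<alpha> v) w = level_edges E \<alpha> w" if "M < w" for w
      using that apart incident by (fastforce simp: level_edges_def)
    have "(x, y) \<notin> level_edges E (balance E \<alpha> v) M"
      using incident(2)[of "(x, y)"] top by (auto simp: level_edges_def)
    then show "level_edges E (balance E \<alpha> v) M \<subset> level_edges E \<alpha> M"
      using apart incident top by (fastforce simp: level_edges_def M_def)
  qed
qed

end
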